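(* Assume $\mathrm{recc}(C)\subseteq\mathrm{recc}(P^B)$. For every $k\in N_2$, $$S_k^C=\{\bar x\}+\mathrm{conv}\Big(\bigcup_{j\in N_1\cup N_2}\{\lambda\bar r^j:\alpha_j<\lambda<\beta_j\}\Big)+\{\lambda\bar r^k:\lambda\le0\}+\mathrm{recc}(C).$$
   Context: Let $A\in\mathbb{R}^{m\times n}$ have full row rank, $b\in\mathbb{R}^m$, and $P=\{x\in\mathbb{R}^n_+:Ax=b\}$. Let $C\subseteq\mathbb{R}^n$ be an open convex set. Fix a basis $B$ of $P$ with nonbasic set $N=\{1,\dots,n\}\setminus B$. Write $P=\{x:x_i=\bar b_i-\sum_{j\in N}\bar a_{ij}x_j\ (i\in B),\ x\ge0\}$ with $\bar b\ge0$. The basic solution $\bar x$ has $\bar x_i=\bar b_i$ ($i\in B$) and $0$ ($i\in N$). $P^B$ is obtained by dropping $x_i\ge0$ for $i\in B$. For $j\in N$, $\bar r^j$ has $\bar r^j_k=-\bar a_{kj}$ ($k\in B$), $\bar r^j_j=1$, and $0$ otherwise. Thus $P^B=\{\bar x+\sum_{j\in N}x_j\bar r^j:x_j\ge0\}$. It is assumed that $\bar x\notin\mathrm{cl}(C)$. For $j\in N$, $\alpha_j=\inf\{\lambda\ge0:\bar x+\lambda\bar r^j\in C\}$ and $\beta_j=\sup\{\lambda\ge0:\bar x+\lambda\bar r^j\in C\}$, with $\alpha_j=+\infty$, $\beta_j=-\infty$ if the halfline misses $C$. Define - $N_1=\{j:\alpha_j\in(0,\infty),\beta_j=+\infty\}$;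 - $N_2=\{j:\alpha_j\in(0,\infty),\beta_j\in(\alpha_j,\infty)\}$. For a set $K$, $\mathrm{recc}(K)=\{d:x+\lambda d\in K\ \forall x\in K,\lambda\ge0\}$. For $k\in N_2$, $S_k^C=\{\bar x\}+\mathrm{conv}\big(\bigcup_{j\in N_2}\{\lambda\bar r^j:0\le\lambda<\beta_j\}\big)+\{\lambda\bar r^k:\lambda\le0\}+\mathrm{recc}(C)$. *)

theory Defs
  imports "HOL-Analysis.Analysis"
begin

definition recc :: "('a::real_vector) set \<Rightarrow> 'a set" where
  "recc K = {d. \<forall>x\<in>K. \<forall>t::real. t \<ge> 0 \<longrightarrow> x + t *\<^sub>R d \<in> K}"

definition basic_solution :: "real^'n^'m \<Rightarrow> real^'m \<Rightarrow> 'n set \<Rightarrow> real^'n" where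
  "basic_solution A b B = (THE x. A *v x = b \<and> (\<forall>j. j \<notin> B \<longrightarrow> x $ j = 0))"

definition is_basis :: "real^'n^'m \<Rightarrow> 'n set \<Rightarrow> bool" where
  "is_basis A B \<longleftrightarrow> card B = CARD('m) \<and>
     (\<forall>x. A *v x = 0 \<and> (\<forall>j. j \<notin> B \<longrightarrow> x $ j = 0) \<longrightarrow> x = 0)"

definition is_feasible_basis :: "real^'n^'m \<Rightarrow> real^'m \<Rightarrow> 'n set \<Rightarrow> bool" where
  "is_feasible_basis A b B \<longleftrightarrow> is_basis A B \<and> (\<forall>i. basic_solution A b B $ i \<ge> 0)"

text \<open>The ray r^j (j nonbasic): r^j_k = -abar_kj for k in B, r^j_j = 1, 0 on other
  nonbasic coordinates; equivalently the unique such vector in the kernel of A.\<close>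
definition ray :: "real^'n^'m \<Rightarrow> 'n set \<Rightarrow> 'n \<Rightarrow> real^'n" where
  "ray A B j = (THE r. A *v r = 0 \<and> r $ j = 1 \<and> (\<forall>l. l \<notin> B \<and> l \<noteq> j \<longrightarrow> r $ l = 0))"

definition PB :: "real^'n^'m \<Rightarrow> real^'m \<Rightarrow> 'n set \<Rightarrow> (real^'n) set" where
  "PB A b B = {x. A *v x = b \<and> (\<forall>j. j \<notin> B \<longrightarrow> x $ j \<ge> 0)}"

text \<open>alpha and beta with conventions inf {} = +inf, sup {} = -inf.\<close>
definition alpha :: "('a::real_vector) set \<Rightarrow> 'a \<Rightarrow> 'a \<Rightarrow> ereal" where
  "alpha C x r = Inf (ereal ` {t. t \<ge> 0 \<and> x + t *\<^sub>R r \<in> C})"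

definition beta :: "('a::real_vector) set \<Rightarrow> 'a \<Rightarrow> 'a \<Rightarrow> ereal" where
  "beta C x r = Sup (ereal ` {t. t \<ge> 0 \<and> x + t *\<^sub>R r \<in> C})"

definition N1 :: "real^'n^'m \<Rightarrow> real^'m \<Rightarrow> 'n set \<Rightarrow> (real^'n) set \<Rightarrow> 'n set" where
  "N1 A b B C = {j. j \<notin> B \<and>
     0 < alpha C (basic_solution A b B) (ray A B j) \<and>
     alpha C (basic_solution A b B) (ray A B j) < \<infinity> \<and>
     beta C (basic_solution A b B) (ray A B j) = \<infinity>}"

definition N2 :: "real^'n^'m \<Rightarrow> real^'m \<Rightarrow> 'n set \<Rightarrow> (real^'n) set \<Rightarrow> 'n set" where
  "N2 A b B C = {j. j \<notin> B \<and>
     0 < alpha C (basic_solution A b B) (ray A B j) \<and>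
     alpha C (basic_solution A b B) (ray A B j) < \<infinity> \<and>
     alpha C (basic_solution A b B) (ray A B j) < beta C (basic_solution A b B) (ray A B j) \<and>
     beta C (basic_solution A b B) (ray A B j) < \<infinity>}"

definition S_set :: "real^'n^'m \<Rightarrow> real^'m \<Rightarrow> 'n set \<Rightarrow> (real^'n) set \<Rightarrow> 'n \<Rightarrow> (real^'n) set" where
  "S_set A b B C k =
    {basic_solution A b B + u + v + w | u v w.
       u \<in> convex hull (\<Union>j\<in>N2 A b B C.
              {t *\<^sub>R ray A B j | t. 0 \<le> t \<and> ereal t < beta C (basic_solution A b B) (ray A B j)})
     \<and> v \<in> {t *\<^sub>R ray A B k | t. t \<le> 0}
     \<and> w \<in> recc C}"

end

theory Submission
  imports Defs
begin

text \<open>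
  For \<open>j \<in> N\<^sub>1\<close> we have \<open>\<beta>\<^sub>j = \<infinity>\<close>; since \<open>C\<close> is open and convex, the whole ray \<open>r\<^sup>j\<close> then
  lies in \<open>recc(C)\<close>, so the new generators \<open>\<lambda> r\<^sup>j\<close> (\<open>\<lambda> > \<alpha>\<^sub>j > 0\<close>) are absorbed by the cone
  \<open>recc(C)\<close>. For \<open>j \<in> N\<^sub>2\<close>, a generator \<open>t r\<^sup>j\<close> with \<open>0 \<le> t \<le> \<alpha>\<^sub>j\<close> is dropped; it is the
  convex combination \<open>\<theta> (\<mu> r\<^sup>j) + (1 - \<theta>) (\<nu> r\<^sup>k)\<close> of two remaining generators
  (\<open>\<alpha>\<^sub>j < \<mu> < \<beta>\<^sub>j\<close>, \<open>\<alpha>\<^sub>k < \<nu> < \<beta>\<^sub>k\<close>, \<open>\<theta> = t/\<mu>\<close>) plus the nonpositive multiple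
  \<open>-(1 - \<theta>) \<nu> r\<^sup>k\<close>, which is absorbed by the cone \<open>{\<lambda> r\<^sup>k : \<lambda> \<le> 0}\<close>.
\<close>

lemma convex_cone_recc: "convex_cone (recc C)"
  unfolding convex_cone_iff
proof (intro conjI ballI allI impI)
  show "0 \<in> recc C" by (simp add: recc_def)
next
  fix d1 d2 assume d: "d1 \<in> recc C" "d2 \<in> recc C"
  show "d1 + d2 \<in> recc C" unfolding recc_def
  proof (intro CollectI ballI allI impI)
    fix x and t :: real assume "x \<in> C" "0 \<le> t"
    then have "(x + t *\<^sub>R d1) + t *\<^sub>R d2 \<in> C" using d unfolding recc_def by blast
    then show "x + t *\<^sub>R (d1 + d2) \<in> C" by (simp add: algebra_simps)
  qed
next
  fix d and c :: real assume "d \<in> recc C" "0 \<le> c"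
  then show "c *\<^sub>R d \<in> recc C" by (simp add: recc_def)
qed

lemma convex_cone_nonpos_multiples: "convex_cone {t *\<^sub>R v | t. t \<le> 0}"
  unfolding convex_cone_iff
proof (intro conjI ballI allI impI)
  show "0 \<in> {t *\<^sub>R v | t. t \<le> 0}" by (intro CollectI exI[of _ 0]) simp
next
  fix x y assume "x \<in> {t *\<^sub>R v | t. t \<le> 0}" "y \<in> {t *\<^sub>R v | t. t \<le> 0}"
  then obtain s t where "x = s *\<^sub>R v" "y = t *\<^sub>R v" "s \<le> 0" "t \<le> 0" by blast
  then show "x + y \<in> {t *\<^sub>R v | t. t \<le> 0}"
    by (intro CollectI exI[of _ "s + t"]) (simp add: scaleR_add_left)
next
  fix x and c :: real assume "x \<in> {t *\<^sub>R v | t. t \<le> 0}" "0 \<le> c"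
  then obtain t where "x = t *\<^sub>R v" "t \<le> 0" by blast
  with \<open>0 \<le> c\<close> show "c *\<^sub>R x \<in> {t *\<^sub>R v | t. t \<le> 0}"
    by (intro CollectI exI[of _ "c * t"]) (simp add: mult_nonneg_nonpos)
qed

lemma convex_cone_set_plus_self:
  assumes "convex_cone K" shows "K + K = K"
proof
  show "K + K \<subseteq> K"
  proof
    fix z assume "z \<in> K + K"
    then obtain a b where "z = a + b" "a \<in> K" "b \<in> K" by (rule set_plus_elim)
    with assms show "z \<in> K" by (simp add: convex_cone_add)
  qed
  show "K \<subseteq> K + K"
  proof
    fix x assume "x \<in> K"
    from set_plus_intro[OF this convex_cone_contains_0[OF assms]] show "x \<in> K + K" by simp
  qed
qed

lemma Setcompr_add3_eq_set_plus:
  "{x + u + v + w | u v w. u \<in> U \<and> v \<in> V \<and> w \<in> W} = {x::'a::ab_semigroup_add} + U + V + W"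
  by (fastforce simp: set_plus_def add.assoc)

lemma beta_infinite_imp_unbounded:
  assumes "beta C x d = \<infinity>"
  shows "\<exists>s. s > M \<and> x + s *\<^sub>R d \<in> C"
proof (rule ccontr)
  assume "\<not> ?thesis"
  then have "\<forall>s\<in>{t. t \<ge> 0 \<and> x + t *\<^sub>R d \<in> C}. ereal s \<le> ereal M"
    using not_less by fastforce
  then have "beta C x d \<le> ereal M" unfolding beta_def by (auto intro: Sup_least)
  with assms show False by simp
qed

lemma convex_combination_towards_ray:
  fixes d :: "'a::real_vector"
  assumes "0 < t" "t < s"
  shows "(1 - t/s) *\<^sub>R (y + (t/(s-t)) *\<^sub>R (y - x)) + (t/s) *\<^sub>R (x + s *\<^sub>R d) = y + t *\<^sub>R d"
  using assms
  by (simp add: field_simps scaleR_add_right scaleR_diff_right flip: scaleR_add_left scaleR_diff_left)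

lemma unbounded_ray_in_recc:
  fixes C :: "'a::real_normed_vector set"
  assumes "open C" "convex C" and unbounded: "\<And>M. \<exists>s. s > M \<and> x + s *\<^sub>R d \<in> C"
  shows "d \<in> recc C"
  unfolding recc_def
proof (intro CollectI ballI allI impI)
  fix y and t :: real assume y: "y \<in> C" and "0 \<le> t"
  show "y + t *\<^sub>R d \<in> C"
  proof (cases "t = 0")
    case True
    with y show ?thesis by simp
  next
    case False
    with \<open>0 \<le> t\<close> have "0 < t" by simp
    obtain e where e: "e > 0" "ball y e \<subseteq> C" using \<open>open C\<close> y open_contains_ball by blast
    obtain s where s: "s > t + t * norm (y - x) / e" "x + s *\<^sub>R d \<in> C"
      using unbounded by blast
    have "0 \<le> t * norm (y - x) / e" using \<open>0 \<le> t\<close> e by simp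
    with s have "t < s" by linarith
    define w where "w = y + (t/(s-t)) *\<^sub>R (y - x)"
    from s have "t * norm (y - x) / e < s - t" by linarith
    with e have "t * norm (y - x) < (s - t) * e" by (simp add: field_simps)
    with \<open>t < s\<close> have "t * norm (y - x) / (s - t) < e" by (simp add: field_simps)
    with \<open>0 \<le> t\<close> \<open>t < s\<close> have "dist y w < e" by (simp add: w_def dist_norm)
    with e have "w \<in> C" by auto
    with s \<open>0 < t\<close> \<open>t < s\<close> have "(1 - t/s) *\<^sub>R w + (t/s) *\<^sub>R (x + s *\<^sub>R d) \<in> C"
      using convexD[OF \<open>convex C\<close> \<open>w \<in> C\<close> s(2)] by simp
    then show ?thesis
      unfolding w_def convex_combination_towards_ray[OF \<open>0 < t\<close> \<open>t < s\<close>] .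
  qed
qed

lemma convex_hull_subset_hull_plus_cone:
  assumes "convex_cone R" "0 \<in> convex hull G'" "G \<subseteq> G' \<union> R"
  shows "convex hull G \<subseteq> convex hull G' + R"
proof (rule hull_minimal)
  show "convex (convex hull G' + R)"
    using \<open>convex_cone R\<close> by (simp add: convex_set_plus convex_cone_def)
  show "G \<subseteq> convex hull G' + R"
  proof
    fix g assume "g \<in> G"
    with assms(3) consider "g \<in> G'" | "g \<in> R" by blast
    then show "g \<in> convex hull G' + R"
    proof cases
      case 1
      then show ?thesis
        using set_plus_intro[OF hull_inc convex_cone_contains_0[OF \<open>convex_cone R\<close>]] by simp
    next
      case 2
      then show ?thesis using set_plus_intro[OF \<open>0 \<in> convex hull G'\<close>] by simp
    qed
  qed
qed

lemma truncated_rays_subset_hull_plus_nonpos_ray: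
  fixes r :: "'j \<Rightarrow> 'a::real_vector" and al be :: "'j \<Rightarrow> ereal"
  assumes M: "\<And>j. j \<in> M \<Longrightarrow> al j < be j" and "k \<in> M" "0 \<le> al k"
  shows "convex hull (\<Union>j\<in>M. {t *\<^sub>R r j | t. 0 \<le> t \<and> ereal t < be j})
    \<subseteq> convex hull (\<Union>j\<in>M. {t *\<^sub>R r j | t. al j < ereal t \<and> ereal t < be j}) + {t *\<^sub>R r k | t. t \<le> 0}"
    (is "_ \<subseteq> convex hull ?G + ?K")
proof (rule hull_minimal)
  have "convex ?K" using convex_cone_nonpos_multiples[of "r k"] unfolding convex_cone_def by blast
  then show "convex (convex hull ?G + ?K)" by (simp add: convex_set_plus)
  have "t *\<^sub>R r j \<in> convex hull ?G + ?K" if j: "j \<in> M" "0 \<le> t" "ereal t < be j" for j t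
  proof (cases "al j < ereal t")
    case True
    with j have "t *\<^sub>R r j \<in> convex hull ?G" by (blast intro: hull_inc)
    from set_plus_intro[OF this convex_cone_contains_0[OF convex_cone_nonpos_multiples]]
    show ?thesis by simp
  next
    case False
    obtain \<mu> where \<mu>: "al j < ereal \<mu>" "ereal \<mu> < be j" using ereal_dense2[OF M[OF \<open>j \<in> M\<close>]] by blast
    obtain \<nu> where \<nu>: "al k < ereal \<nu>" "ereal \<nu> < be k" using ereal_dense2[OF M[OF \<open>k \<in> M\<close>]] by blast
    from False \<mu>(1) have "ereal t < ereal \<mu>" by (meson not_less order.strict_trans1)
    then have "t < \<mu>" by simp
    from \<open>0 \<le> al k\<close> \<nu>(1) have "ereal 0 < ereal \<nu>" by (metis order.strict_trans1 zero_ereal_def)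
    then have "0 < \<nu>" by simp
    define \<theta> where "\<theta> = t / \<mu>"
    have \<theta>: "0 \<le> \<theta>" "\<theta> \<le> 1" "\<theta> * \<mu> = t" using \<open>t < \<mu>\<close> \<open>0 \<le> t\<close> by (auto simp: \<theta>_def)
    have "\<mu> *\<^sub>R r j \<in> ?G" "\<nu> *\<^sub>R r k \<in> ?G" using j(1) \<mu> \<open>k \<in> M\<close> \<nu> by blast+
    with \<theta> have hull: "\<theta> *\<^sub>R (\<mu> *\<^sub>R r j) + (1 - \<theta>) *\<^sub>R (\<nu> *\<^sub>R r k) \<in> convex hull ?G"
      by (intro convexD[OF convex_convex_hull]) (auto intro: hull_inc)
    have nonpos: "(- ((1 - \<theta>) * \<nu>)) *\<^sub>R r k \<in> ?K"
      using \<theta> \<open>0 < \<nu>\<close> by (intro CollectI exI[of _ "- ((1 - \<theta>) * \<nu>)"]) simp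
    have combination: "\<theta> *\<^sub>R (\<mu> *\<^sub>R r j) + (1 - \<theta>) *\<^sub>R (\<nu> *\<^sub>R r k) + (- ((1 - \<theta>) * \<nu>)) *\<^sub>R r k = t *\<^sub>R r j"
      using \<theta>(3) by (simp add: algebra_simps)
    show ?thesis using set_plus_intro[OF hull nonpos] unfolding combination .
  qed
  then show "(\<Union>j\<in>M. {t *\<^sub>R r j | t. 0 \<le> t \<and> ereal t < be j}) \<subseteq> convex hull ?G + ?K"
    by blast
qed

lemma convex_hull_truncated_rays_plus_cones:
  fixes r :: "'j \<Rightarrow> 'a::real_vector" and al be :: "'j \<Rightarrow> ereal"
  assumes R: "convex_cone R"
    and M1: "\<And>j. j \<in> M1 \<Longrightarrow> r j \<in> R \<and> 0 < al j"
    and M2: "\<And>j. j \<in> M2 \<Longrightarrow> 0 < al j \<and> al j < be j"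
    and "k \<in> M2"
  shows "convex hull (\<Union>j\<in>M2. {t *\<^sub>R r j | t. 0 \<le> t \<and> ereal t < be j}) + {t *\<^sub>R r k | t. t \<le> 0} + R
    = convex hull (\<Union>j\<in>M1 \<union> M2. {t *\<^sub>R r j | t. al j < ereal t \<and> ereal t < be j})
        + {t *\<^sub>R r k | t. t \<le> 0} + R"
    (is "convex hull ?G2 + ?K + R = convex hull ?G + ?K + R")
proof -
  have pos: "0 \<le> t" if "0 < al j" "al j < ereal t" for j t
  proof -
    from that have "ereal 0 < ereal t" by (metis order.strict_trans zero_ereal_def)
    then show ?thesis by simp
  qed
  have "convex hull ?G2
      \<subseteq> convex hull (\<Union>j\<in>M2. {t *\<^sub>R r j | t. al j < ereal t \<and> ereal t < be j}) + ?K"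
    using M2 \<open>k \<in> M2\<close> by (intro truncated_rays_subset_hull_plus_nonpos_ray) (auto simp: less_imp_le)
  also have "\<dots> \<subseteq> convex hull ?G + ?K" by (intro set_plus_mono2 hull_mono) auto
  finally have G2_G: "convex hull ?G2 \<subseteq> convex hull ?G + ?K" .
  from M2[OF \<open>k \<in> M2\<close>] have "ereal 0 < be k" by (metis order.strict_trans zero_ereal_def)
  with \<open>k \<in> M2\<close> have "0 *\<^sub>R r k \<in> ?G2" by blast
  then have "0 \<in> convex hull ?G2" by (simp add: hull_inc)
  moreover have "?G \<subseteq> ?G2 \<union> R"
  proof
    fix g assume "g \<in> ?G"
    then obtain j t where j: "j \<in> M1 \<union> M2" "al j < ereal t" "ereal t < be j" and g: "g = t *\<^sub>R r j"
      by blast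
    show "g \<in> ?G2 \<union> R"
    proof (cases "j \<in> M2")
      case True
      with j M2 pos have "0 \<le> t" by blast
      with True j g show ?thesis by blast
    next
      case False
      with j M1 pos have "r j \<in> R" "0 \<le> t" by blast+
      with g show ?thesis by (simp add: convex_cone_scaleR[OF R])
    qed
  qed
  ultimately have G_G2: "convex hull ?G \<subseteq> convex hull ?G2 + R"
    by (rule convex_hull_subset_hull_plus_cone[OF R])
  show ?thesis
  proof
    have "convex hull ?G2 + ?K + R \<subseteq> convex hull ?G + ?K + ?K + R"
      using G2_G by (intro set_plus_mono2 subset_refl)
    also have "\<dots> = convex hull ?G + ?K + R"
      by (simp add: add.assoc convex_cone_set_plus_self[OF convex_cone_nonpos_multiples])
    finally show "convex hull ?G2 + ?K + R \<subseteq> convex hull ?G + ?K + R" .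
    have "convex hull ?G + ?K + R \<subseteq> convex hull ?G2 + R + ?K + R"
      using G_G2 by (intro set_plus_mono2 subset_refl)
    also have "\<dots> = convex hull ?G2 + ?K + (R + R)"
      by (simp only: add.assoc add.left_commute[of R ?K])
    also have "\<dots> = convex hull ?G2 + ?K + R"
      by (simp only: convex_cone_set_plus_self[OF R])
    finally show "convex hull ?G + ?K + R \<subseteq> convex hull ?G2 + ?K + R" .
  qed
qed

theorem proposition5:
  fixes A :: "real^'n^'m" and b :: "real^'m" and B :: "'n set" and C :: "(real^'n) set"
  assumes "rank A = CARD('m)"
    and "is_feasible_basis A b B"
    and "open C" and "convex C"
    and "basic_solution A b B \<notin> closure C"
    and "recc C \<subseteq> recc (PB A b B)"
    and "k \<in> N2 A b B C"
  shows "S_set A b B C k =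
    {basic_solution A b B + u + v + w | u v w.
       u \<in> convex hull (\<Union>j\<in>N1 A b B C \<union> N2 A b B C.
              {t *\<^sub>R ray A B j | t. alpha C (basic_solution A b B) (ray A B j) < ereal t
                  \<and> ereal t < beta C (basic_solution A b B) (ray A B j)})
     \<and> v \<in> {t *\<^sub>R ray A B k | t. t \<le> 0}
     \<and> w \<in> recc C}"
proof -
  let ?x = "basic_solution A b B"
  have N1_recc: "ray A B j \<in> recc C \<and> 0 < alpha C ?x (ray A B j)" if "j \<in> N1 A b B C" for j
  proof -
    from that have "beta C ?x (ray A B j) = \<infinity>" "0 < alpha C ?x (ray A B j)"
      unfolding N1_def by auto
    then show ?thesis
      using unbounded_ray_in_recc[OF \<open>open C\<close> \<open>convex C\<close> beta_infinite_imp_unbounded] by blast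
  qed
  have N2_interval: "0 < alpha C ?x (ray A B j) \<and> alpha C ?x (ray A B j) < beta C ?x (ray A B j)"
    if "j \<in> N2 A b B C" for j
    using that unfolding N2_def by blast
  have "convex hull (\<Union>j\<in>N2 A b B C.
            {t *\<^sub>R ray A B j | t. 0 \<le> t \<and> ereal t < beta C ?x (ray A B j)})
          + {t *\<^sub>R ray A B k | t. t \<le> 0} + recc C
      = convex hull (\<Union>j\<in>N1 A b B C \<union> N2 A b B C.
            {t *\<^sub>R ray A B j | t. alpha C ?x (ray A B j) < ereal t \<and> ereal t < beta C ?x (ray A B j)})
          + {t *\<^sub>R ray A B k | t. t \<le> 0} + recc C"
    using convex_cone_recc N1_recc N2_interval \<open>k \<in> N2 A b B C\<close> by (rule convex_hull_truncated_rays_plus_cones)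
  then show ?thesis
    unfolding S_set_def Setcompr_add3_eq_set_plus by (simp only: add.assoc)
qed

end
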